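(* Let $G$ act on $M$ and consider the induced action on $p$-dimensional submanifolds, with a moving frame producing invariant differential operators $\mathcal{D}_1,\dots,\mathcal{D}_p$ satisfying $[\mathcal{D}_j,\mathcal{D}_k]=\sum_{i=1}^p Y^i_{jk}\mathcal{D}_i$. Let $I=(I_1,\dots,I_p)$ be differential invariants such that the $p\times p$ matrix $\mathcal{D}(I)=(\mathcal{D}_iI_l)$ is nonsingular. Then every commutator invariant $Y^i_{jk}$ can be expressed as a rational function of the invariant derivatives of order $\le2$ of $I_1,\dots,I_p$.
   Context: The commutator invariants $Y^i_{jk}=-Y^i_{kj}$ are the differential invariants appearing as coefficients in the commutation formulae of the invariant differential operators $\mathcal{D}_1,\dots,\mathcal{D}_p$ (the total derivations dual to the contact-invariant coframe obtained from the moving frame). *)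

theory Defs
  imports "HOL-Analysis.Analysis"
begin

fun iter_D :: "('p \<Rightarrow> ('x \<Rightarrow> real) \<Rightarrow> ('x \<Rightarrow> real)) \<Rightarrow> 'p list \<Rightarrow> ('x \<Rightarrow> real) \<Rightarrow> ('x \<Rightarrow> real)" where
  "iter_D D [] f = f"
| "iter_D D (j # js) f = D j (iter_D D js f)"

inductive polyfun :: "'v set \<Rightarrow> (('v \<Rightarrow> real) \<Rightarrow> real) \<Rightarrow> bool" for V where
  const: "polyfun V (\<lambda>u. c)"
| var: "v \<in> V \<Longrightarrow> polyfun V (\<lambda>u. u v)"
| add: "polyfun V P \<Longrightarrow> polyfun V Q \<Longrightarrow> polyfun V (\<lambda>u. P u + Q u)"
| mult: "polyfun V P \<Longrightarrow> polyfun V Q \<Longrightarrow> polyfun V (\<lambda>u. P u * Q u)"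

text \<open>Invariance of a function on the (jet) space X under the (prolonged) group action.\<close>
definition invariant_fun :: "('g \<Rightarrow> 'x \<Rightarrow> 'x) \<Rightarrow> 'x set \<Rightarrow> ('x \<Rightarrow> real) \<Rightarrow> bool" where
  "invariant_fun act X f \<longleftrightarrow> (\<forall>g z. z \<in> X \<longrightarrow> act g z \<in> X \<longrightarrow> f (act g z) = f z)"

text \<open>Variables for the invariant derivatives D_J I_l of order |J| \<le> 2, and their values at z.\<close>
definition deriv_vars_le2 :: "('p list \<times> 'p) set" where
  "deriv_vars_le2 = {(J, l). length J \<le> 2}"

definition deriv_values ::
  "('p \<Rightarrow> ('x \<Rightarrow> real) \<Rightarrow> ('x \<Rightarrow> real)) \<Rightarrow> ('p \<Rightarrow> 'x \<Rightarrow> real) \<Rightarrow> 'x \<Rightarrow> ('p list \<times> 'p) \<Rightarrow> real" where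
  "deriv_values D I z = (\<lambda>(J, l). iter_D D J (I l) z)"

definition rational_in_derivs_le2 ::
  "'x set \<Rightarrow> ('p \<Rightarrow> ('x \<Rightarrow> real) \<Rightarrow> ('x \<Rightarrow> real)) \<Rightarrow> ('p \<Rightarrow> 'x \<Rightarrow> real) \<Rightarrow> ('x \<Rightarrow> real) \<Rightarrow> bool" where
  "rational_in_derivs_le2 X D I f \<longleftrightarrow>
     (\<exists>P Q. polyfun deriv_vars_le2 P \<and> polyfun deriv_vars_le2 Q \<and>
        (\<forall>z\<in>X. Q (deriv_values D I z) \<noteq> 0 \<and>
                f z = P (deriv_values D I z) / Q (deriv_values D I z)))"

end

theory Submission
  imports Defs
begin

(* Apply the commutation formula to the invariants I_1,...,I_p:
     D_j D_k I_l - D_k D_j I_l = sum_i Y^i_jk * D_i I_l     (l = 1..p).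
   For fixed j, k this is a p x p linear system for the unknowns Y^1_jk,...,Y^p_jk
   whose coefficient matrix is the transpose of D(I) = (D_i I_l), and whose right-hand
   side consists of second-order invariant derivatives of I.  Since D(I) is nonsingular,
   Cramer's rule expresses each Y^i_jk as a quotient of two determinants; both are
   polynomials in the invariant derivatives of order <= 2, and the denominator det D(I)
   never vanishes.  Only the commutation formula (applied to the I_l) and the
   nonsingularity of D(I) enter the argument. *)

lemma polyfun_sum:
  "finite S \<Longrightarrow> (\<And>s. s \<in> S \<Longrightarrow> polyfun V (f s)) \<Longrightarrow> polyfun V (\<lambda>u. \<Sum>s\<in>S. f s u)"
proof (induction S rule: finite_induct)
  case empty
  then show ?case using polyfun.const[of V 0] by simp
next
  case (insert x S)
  then show ?case using polyfun.add[of V "f x" "\<lambda>u. \<Sum>s\<in>S. f s u"] by simp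
qed

lemma polyfun_prod:
  "finite S \<Longrightarrow> (\<And>s. s \<in> S \<Longrightarrow> polyfun V (f s)) \<Longrightarrow> polyfun V (\<lambda>u. \<Prod>s\<in>S. f s u)"
proof (induction S rule: finite_induct)
  case empty
  then show ?case using polyfun.const[of V 1] by simp
next
  case (insert x S)
  then show ?case using polyfun.mult[of V "f x" "\<lambda>u. \<Prod>s\<in>S. f s u"] by simp
qed

lemma polyfun_diff:
  assumes "polyfun V P" and "polyfun V Q"
  shows "polyfun V (\<lambda>u. P u - Q u)"
proof -
  have "polyfun V (\<lambda>u. P u + (-1) * Q u)"
    by (intro polyfun.add polyfun.mult assms polyfun.const)
  then show ?thesis by simp
qed

text \<open>A determinant (Leibniz formula: a sum of signed products of entries) of a matrix
  with polynomial entries is polynomial.\<close>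
lemma polyfun_det:
  fixes M :: "('v \<Rightarrow> real) \<Rightarrow> real^'n::finite^'n"
  assumes "\<And>a b. polyfun V (\<lambda>u. M u $ a $ b)"
  shows "polyfun V (\<lambda>u. det (M u))"
  unfolding det_def
proof (rule polyfun_sum)
  fix p :: "'n \<Rightarrow> 'n"
  have "polyfun V (\<lambda>u. \<Prod>a\<in>UNIV. M u $ a $ p a)"
    by (rule polyfun_prod) (simp_all add: assms)
  then show "polyfun V (\<lambda>u. of_int (sign p) * (\<Prod>a\<in>UNIV. M u $ a $ p a))"
    by (rule polyfun.mult[OF polyfun.const])
qed simp

lemma cramer_rational_solution:
  fixes M :: "('v \<Rightarrow> real) \<Rightarrow> real^'n::finite^'n"
    and c :: "('v \<Rightarrow> real) \<Rightarrow> real^'n"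
    and v :: "'x \<Rightarrow> 'v \<Rightarrow> real"
    and y :: "'x \<Rightarrow> real^'n"
  assumes M_poly: "\<And>a b. polyfun V (\<lambda>u. M u $ a $ b)"
    and c_poly: "\<And>a. polyfun V (\<lambda>u. c u $ a)"
    and nonsingular: "\<And>z. z \<in> X \<Longrightarrow> det (M (v z)) \<noteq> 0"
    and system: "\<And>z. z \<in> X \<Longrightarrow> M (v z) *v y z = c (v z)"
  shows "\<exists>P Q. polyfun V P \<and> polyfun V Q \<and>
           (\<forall>z\<in>X. Q (v z) \<noteq> 0 \<and> y z $ i = P (v z) / Q (v z))"
proof (intro exI conjI ballI)
  define P where "P u = det (\<chi> a b. if b = i then c u $ a else M u $ a $ b)" for u
  define Q where "Q u = det (M u)" for u
  show "polyfun V P"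
    unfolding P_def
  proof (rule polyfun_det)
    fix a b :: 'n
    show "polyfun V (\<lambda>u. (\<chi> a b. if b = i then c u $ a else M u $ a $ b) $ a $ b)"
      by (cases "b = i") (simp_all add: M_poly c_poly)
  qed
  show "polyfun V Q"
    unfolding Q_def by (rule polyfun_det) (rule M_poly)
  fix z assume z: "z \<in> X"
  show "Q (v z) \<noteq> 0"
    unfolding Q_def using nonsingular[OF z] .
  have "P (v z) = y z $ i * Q (v z)"
    using cramer_lemma[of i "M (v z)" "y z"] by (simp only: P_def Q_def system[OF z])
  then show "y z $ i = P (v z) / Q (v z)"
    using nonsingular[OF z] by (simp add: Q_def)
qed

text \<open>In terms of the values u(J, l) = D_J I_l: the matrix (D_a I_l)_{l,a}, i.e. the
  transpose of D(I), and the vector of commutators D_j D_k I_l - D_k D_j I_l.\<close>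
definition derivative_matrix :: "('p list \<times> 'p \<Rightarrow> real) \<Rightarrow> real^'p^'p" where
  "derivative_matrix u = (\<chi> l a. u ([a], l))"

definition commutator_vector :: "'p \<Rightarrow> 'p \<Rightarrow> ('p list \<times> 'p \<Rightarrow> real) \<Rightarrow> real^'p" where
  "commutator_vector j k u = (\<chi> l. u ([j, k], l) - u ([k, j], l))"

lemma derivative_matrix_poly: "polyfun deriv_vars_le2 (\<lambda>u. derivative_matrix u $ l $ a)"
  by (simp add: derivative_matrix_def deriv_vars_le2_def polyfun.var)

lemma commutator_vector_poly: "polyfun deriv_vars_le2 (\<lambda>u. commutator_vector j k u $ l)"
  by (simp add: commutator_vector_def deriv_vars_le2_def polyfun.var polyfun_diff)

lemma det_derivative_matrix:
  "det (derivative_matrix (deriv_values D I z)) = det (\<chi> i l. D i (I l) z :: real^'p::finite^'p)"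
proof -
  have "derivative_matrix (deriv_values D I z) = transpose (\<chi> i l. D i (I l) z)"
    by (simp add: derivative_matrix_def deriv_values_def transpose_def)
  then show ?thesis by (simp add: det_transpose)
qed

lemma commutator_system:
  fixes D :: "'p::finite \<Rightarrow> ('x \<Rightarrow> real) \<Rightarrow> ('x \<Rightarrow> real)"
  assumes "\<And>l. D j (D k (I l)) z - D k (D j (I l)) z = (\<Sum>a\<in>UNIV. Y a j k z * D a (I l) z)"
  shows "derivative_matrix (deriv_values D I z) *v (\<chi> a. Y a j k z)
           = commutator_vector j k (deriv_values D I z)"
  using assms
  by (simp add: vec_eq_iff derivative_matrix_def commutator_vector_def deriv_values_def
      matrix_vector_mult_def mult.commute)

theorem theorem4p4:
  fixes X :: "'x set"
    and act :: "'g \<Rightarrow> 'x \<Rightarrow> 'x"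
    and F :: "('x \<Rightarrow> real) set"
    and D :: "'p::finite \<Rightarrow> ('x \<Rightarrow> real) \<Rightarrow> ('x \<Rightarrow> real)"
    and Y :: "'p \<Rightarrow> 'p \<Rightarrow> 'p \<Rightarrow> 'x \<Rightarrow> real"
    and I :: "'p \<Rightarrow> 'x \<Rightarrow> real"
  assumes D_closed: "\<And>i f. f \<in> F \<Longrightarrow> D i f \<in> F"
    and D_invariant: "\<And>i f. f \<in> F \<Longrightarrow> invariant_fun act X f \<Longrightarrow> invariant_fun act X (D i f)"
    and Y_invariant: "\<And>i j k. Y i j k \<in> F \<and> invariant_fun act X (Y i j k)"
    and Y_skew: "\<And>i j k. Y i j k = (\<lambda>z. - Y i k j z)"
    and commutation: "\<And>j k f z. f \<in> F \<Longrightarrow> z \<in> X \<Longrightarrow>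
          D j (D k f) z - D k (D j f) z = (\<Sum>i\<in>UNIV. Y i j k z * D i f z)"
    and I_invariant: "\<And>l. I l \<in> F \<and> invariant_fun act X (I l)"
    and nonsingular: "\<And>z. z \<in> X \<Longrightarrow> det (\<chi> i l. D i (I l) z :: real^'p^'p) \<noteq> 0"
  shows "\<forall>i j k. rational_in_derivs_le2 X D I (Y i j k)"
proof (intro allI)
  fix i j k :: 'p
  have system: "derivative_matrix (deriv_values D I z) *v (\<chi> a. Y a j k z)
                  = commutator_vector j k (deriv_values D I z)" if "z \<in> X" for z
    using commutation[OF conjunct1[OF I_invariant] \<open>z \<in> X\<close>] by (rule commutator_system)
  have "\<exists>P Q. polyfun deriv_vars_le2 P \<and> polyfun deriv_vars_le2 Q \<and>
          (\<forall>z\<in>X. Q (deriv_values D I z) \<noteq> 0 \<and>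
             (\<chi> a. Y a j k z) $ i = P (deriv_values D I z) / Q (deriv_values D I z))"
    by (rule cramer_rational_solution[OF derivative_matrix_poly commutator_vector_poly])
       (simp_all add: det_derivative_matrix nonsingular system)
  then show "rational_in_derivs_le2 X D I (Y i j k)"
    by (simp add: rational_in_derivs_le2_def)
qed

end
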